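(* For all $n\ge1$, the number of permutations in $\mathcal{S}_n$ avoiding each of $1243$, $2143$ and $321$ equals $n+2\binom{n}{3}$.
   Context: A permutation $\pi\in\mathcal{S}_n$ avoids $\tau\in\mathcal{S}_k$ if there are no indices $i_1<\dots<i_k$ with $\pi_{i_1}\cdots\pi_{i_k}$ in the same relative order as $\tau_1\cdots\tau_k$. *)

theory Defs
  imports "HOL-Combinatorics.Permutations"
begin

text \<open>A permutation of [n] = {1..n} is a bijection p with p permutes {1..n}; its one-line
  notation is p 1, ..., p n. A pattern tau in S_k is given by its one-line notation as a list
  (values 1..k).\<close>

definition perms :: "nat \<Rightarrow> (nat \<Rightarrow> nat) set" where
  "perms n = {p. p permutes {1..n}}"

definition contains :: "nat \<Rightarrow> (nat \<Rightarrow> nat) \<Rightarrow> nat list \<Rightarrow> bool" where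
  "contains n p tau \<longleftrightarrow>
     (\<exists>i :: nat \<Rightarrow> nat.
        (\<forall>a<length tau. i a \<in> {1..n}) \<and>
        (\<forall>a b. a < b \<and> b < length tau \<longrightarrow> i a < i b) \<and>
        (\<forall>a<length tau. \<forall>b<length tau. p (i a) < p (i b) \<longleftrightarrow> tau ! a < tau ! b))"

definition avoids :: "nat \<Rightarrow> (nat \<Rightarrow> nat) \<Rightarrow> nat list \<Rightarrow> bool" where
  "avoids n p tau \<longleftrightarrow> \<not> contains n p tau"

end

theory Submission
  imports Defs
begin

(* If the last entry of a permutation in Av(1243, 2143, 321) is n, deleting it leaves a member
   of the class for n - 1, and conversely appending n is harmless, because none of the three
   patterns ends with its largest letter.  Otherwise n sits at a position i < n, and avoidance
   forces a rigid shape: the entries after n increase; before n all entries exceed the last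
   entry except at most one, the small entry, and the large ones increase; a small entry that
   is not in first position lies below everything after n.  Such a permutation is determined by
   i, the position k of the small entry and the number r of entries after n below it.  There are
   n - 1 of them without a small entry and n - 2 with one for each 2 <= i < n, so
   a(n) = a(n - 1) + (n - 1) + (n - 2)^2, which sums to n + 2 (n choose 3). *)

section \<open>Occurrences of the three patterns\<close>

lemma contains_iff_index_list:
  "contains n p tau \<longleftrightarrow>
     (\<exists>js. length js = length tau \<and> sorted_wrt (<) js \<and> set js \<subseteq> {1..n} \<and>
        (\<forall>a<length tau. \<forall>b<length tau. p (js ! a) < p (js ! b) \<longleftrightarrow> tau ! a < tau ! b))"
  unfolding contains_def
proof (intro iffI; elim exE conjE)
  fix i
  assume "\<forall>a<length tau. i a \<in> {1..n}" "\<forall>a b. a < b \<and> b < length tau \<longrightarrow> i a < i b"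
      "\<forall>a<length tau. \<forall>b<length tau. p (i a) < p (i b) \<longleftrightarrow> tau ! a < tau ! b"
  then show "\<exists>js. length js = length tau \<and> sorted_wrt (<) js \<and> set js \<subseteq> {1..n} \<and>
        (\<forall>a<length tau. \<forall>b<length tau. p (js ! a) < p (js ! b) \<longleftrightarrow> tau ! a < tau ! b)"
    by (intro exI[of _ "map i [0..<length tau]"]) (auto simp: sorted_wrt_iff_nth_less)
next
  fix js :: "nat list"
  assume len: "length js = length tau" and sorted: "sorted_wrt (<) js" and range: "set js \<subseteq> {1..n}"
    and order: "\<forall>a<length tau. \<forall>b<length tau. p (js ! a) < p (js ! b) \<longleftrightarrow> tau ! a < tau ! b"
  show "\<exists>i. (\<forall>a<length tau. i a \<in> {1..n}) \<and> (\<forall>a b. a < b \<and> b < length tau \<longrightarrow> i a < i b) \<and>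
        (\<forall>a<length tau. \<forall>b<length tau. p (i a) < p (i b) \<longleftrightarrow> tau ! a < tau ! b)"
  proof (intro exI[of _ "(!) js"] conjI)
    show "\<forall>a<length tau. js ! a \<in> {1..n}"
      using range nth_mem len by (metis subsetD)
    show "\<forall>a b. a < b \<and> b < length tau \<longrightarrow> js ! a < js ! b"
      using sorted len by (simp add: sorted_wrt_iff_nth_less)
  qed (fact order)
qed

lemma ex_list_length_Suc:
  "(\<exists>xs. length xs = Suc m \<and> P xs) \<longleftrightarrow> (\<exists>x xs. length xs = m \<and> P (x # xs))"
  by (metis length_Suc_conv)

lemma contains_321:
  "contains n p [3,2,1] \<longleftrightarrow> (\<exists>a b c. 1 \<le> a \<and> a < b \<and> b < c \<and> c \<le> n \<and> p c < p b \<and> p b < p a)"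
  (is "_ \<longleftrightarrow> ?occurrence")
proof
  assume "contains n p [3,2,1]"
  then show ?occurrence
    by (simp add: contains_iff_index_list ex_list_length_Suc numeral_eq_Suc All_less_Suc) blast
next
  assume ?occurrence
  then obtain a b c where "1 \<le> a" "a < b" "b < c" "c \<le> n" "p c < p b" "p b < p a"
    by blast
  then show "contains n p [3,2,1]"
    unfolding contains_iff_index_list
    by (intro exI[of _ "[a, b, c]"]) (auto simp: numeral_eq_Suc All_less_Suc)
qed

lemma contains_1243:
  "contains n p [1,2,4,3] \<longleftrightarrow>
     (\<exists>a b c d. 1 \<le> a \<and> a < b \<and> b < c \<and> c < d \<and> d \<le> n \<and> p a < p b \<and> p b < p d \<and> p d < p c)"
  (is "_ \<longleftrightarrow> ?occurrence")
proof
  assume "contains n p [1,2,4,3]"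
  then show ?occurrence
    by (simp add: contains_iff_index_list ex_list_length_Suc numeral_eq_Suc All_less_Suc) blast
next
  assume ?occurrence
  then obtain a b c d where "1 \<le> a" "a < b" "b < c" "c < d" "d \<le> n" "p a < p b" "p b < p d" "p d < p c"
    by blast
  then show "contains n p [1,2,4,3]"
    unfolding contains_iff_index_list
    by (intro exI[of _ "[a, b, c, d]"]) (auto simp: numeral_eq_Suc All_less_Suc)
qed

lemma contains_2143:
  "contains n p [2,1,4,3] \<longleftrightarrow>
     (\<exists>a b c d. 1 \<le> a \<and> a < b \<and> b < c \<and> c < d \<and> d \<le> n \<and> p b < p a \<and> p a < p d \<and> p d < p c)"
  (is "_ \<longleftrightarrow> ?occurrence")
proof
  assume "contains n p [2,1,4,3]"
  then show ?occurrence
    by (simp add: contains_iff_index_list ex_list_length_Suc numeral_eq_Suc All_less_Suc) blast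
next
  assume ?occurrence
  then obtain a b c d where "1 \<le> a" "a < b" "b < c" "c < d" "d \<le> n" "p b < p a" "p a < p d" "p d < p c"
    by blast
  then show "contains n p [2,1,4,3]"
    unfolding contains_iff_index_list
    by (intro exI[of _ "[a, b, c, d]"]) (auto simp: numeral_eq_Suc All_less_Suc)
qed

section \<open>The class and its members fixing the last position\<close>

(* The conditions for 1243 and 2143 are merged into one: no two entries are followed by a
   descent lying above both of them. *)
definition in_Av :: "nat \<Rightarrow> (nat \<Rightarrow> nat) \<Rightarrow> bool" where
  "in_Av n p \<longleftrightarrow>
     (\<forall>a b c. 1 \<le> a \<and> a < b \<and> b < c \<and> c \<le> n \<longrightarrow> \<not> (p c < p b \<and> p b < p a)) \<and>
     (\<forall>a b c d. 1 \<le> a \<and> a < b \<and> b < c \<and> c < d \<and> d \<le> n \<longrightarrow>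
        \<not> (p a < p d \<and> p b < p d \<and> p d < p c))"

definition Av :: "nat \<Rightarrow> (nat \<Rightarrow> nat) set" where
  "Av n = {p. p permutes {1..n} \<and> in_Av n p}"

lemma permutes_in_Av_iff_avoids:
  assumes "p permutes {1..n}"
  shows "in_Av n p \<longleftrightarrow> avoids n p [1,2,4,3] \<and> avoids n p [2,1,4,3] \<and> avoids n p [3,2,1]"
proof (intro iffI conjI)
  assume "in_Av n p"
  then show "avoids n p [1,2,4,3]" "avoids n p [2,1,4,3]" "avoids n p [3,2,1]"
    unfolding in_Av_def avoids_def contains_321 contains_1243 contains_2143
    by (blast dest: less_trans)+
next
  have "p a < p b \<or> p b < p a" if "a < b" for a b
    using permutes_inj[OF assms] that by (metis injD linorder_neqE_nat less_irrefl)
  moreover assume "avoids n p [1,2,4,3] \<and> avoids n p [2,1,4,3] \<and> avoids n p [3,2,1]"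
  ultimately show "in_Av n p"
    unfolding in_Av_def avoids_def contains_321 contains_1243 contains_2143 by blast
qed

lemma permutes_Suc_fixing_last_iff:
  "p permutes {1..Suc n} \<and> p (Suc n) = Suc n \<longleftrightarrow> p permutes {1..n}"
proof
  assume fixing: "p permutes {1..Suc n} \<and> p (Suc n) = Suc n"
  show "p permutes {1..n}"
  proof (rule permutes_superset)
    show "p permutes {1..Suc n}"
      using fixing ..
    show "p x = x" if "x \<in> {1..Suc n} - {1..n}" for x
    proof -
      from that have "x = Suc n"
        by auto
      with fixing show ?thesis
        by simp
    qed
  qed
next
  assume perm: "p permutes {1..n}"
  show "p permutes {1..Suc n} \<and> p (Suc n) = Suc n"
  proof
    show "p permutes {1..Suc n}"
      using perm by (rule permutes_subset) simp
    show "p (Suc n) = Suc n"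
      using perm by (rule permutes_not_in) simp
  qed
qed

lemma in_Av_mono:
  assumes "in_Av n p" and "m \<le> n"
  shows "in_Av m p"
  using assms unfolding in_Av_def by (meson order.trans)

lemma in_Av_Suc_fixing_last_iff:
  assumes perm: "p permutes {1..Suc n}" and last: "p (Suc n) = Suc n"
  shows "in_Av (Suc n) p \<longleftrightarrow> in_Av n p"
proof
  assume "in_Av (Suc n) p"
  then show "in_Av n p"
    by (rule in_Av_mono) simp
next
  have last_max: "\<not> p (Suc n) < p x" if "1 \<le> x" "x \<le> Suc n" for x
    using permutes_in_image[OF perm, of x] that last by auto
  assume av: "in_Av n p"
  show "in_Av (Suc n) p"
    unfolding in_Av_def
  proof (intro conjI allI impI notI)
    fix a b c
    assume idx: "1 \<le> a \<and> a < b \<and> b < c \<and> c \<le> Suc n" and order: "p c < p b \<and> p b < p a"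
    have "c \<noteq> Suc n"
      using last_max[of b] idx order by auto
    with idx have "c \<le> n" by simp
    with av idx order show False
      unfolding in_Av_def by blast
  next
    fix a b c d
    assume idx: "1 \<le> a \<and> a < b \<and> b < c \<and> c < d \<and> d \<le> Suc n"
      and order: "p a < p d \<and> p b < p d \<and> p d < p c"
    have "d \<noteq> Suc n"
      using last_max[of c] idx order by auto
    with idx have "d \<le> n" by simp
    with av idx order show False
      unfolding in_Av_def by blast
  qed
qed

lemma Av_Suc_fixing_last: "{p \<in> Av (Suc n). p (Suc n) = Suc n} = Av n"
  unfolding Av_def using permutes_Suc_fixing_last_iff in_Av_Suc_fixing_last_iff by blast

section \<open>Permutations of an interval compared by relative order\<close>

lemma card_less_image_permutes:
  fixes p :: "nat \<Rightarrow> nat"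
  assumes perm: "p permutes {1..n}" and x: "x \<in> {1..n}"
  shows "card {y \<in> {1..n}. p y < p x} = p x - 1"
proof -
  have px: "p x \<in> {1..n}"
    using permutes_in_image[OF perm] x by simp
  have "p ` {y \<in> {1..n}. p y < p x} = {z \<in> p ` {1..n}. z < p x}"
    by blast
  also have "\<dots> = {1..<p x}"
    using permutes_image[OF perm] px by auto
  finally have "p ` {y \<in> {1..n}. p y < p x} = {1..<p x}" .
  moreover have "inj_on p {y \<in> {1..n}. p y < p x}"
    using permutes_inj_on[OF perm] .
  ultimately show ?thesis
    by (metis card_atLeastLessThan card_image)
qed

lemma permutes_eq_if_order_reflecting:
  fixes p q :: "nat \<Rightarrow> nat"
  assumes p: "p permutes {1..n}" and q: "q permutes {1..n}"
    and order: "\<And>x y. x \<in> {1..n} \<Longrightarrow> y \<in> {1..n} \<Longrightarrow> q x < q y \<Longrightarrow> p x < p y"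
  shows "p = q"
proof
  fix x
  show "p x = q x"
  proof (cases "x \<in> {1..n}")
    case False
    then show ?thesis
      using permutes_not_in[OF p] permutes_not_in[OF q] by simp
  next
    case x: True
    have "q y < q x \<longleftrightarrow> p y < p x" if y: "y \<in> {1..n}" for y
    proof
      assume "p y < p x"
      then have "q y \<noteq> q x"
        using permutes_inj[OF q] by (auto dest: injD)
      with \<open>p y < p x\<close> order[OF x y] show "q y < q x"
        by (meson linorder_neqE_nat order.asym)
    qed (rule order[OF y x])
    then have "{y \<in> {1..n}. p y < p x} = {y \<in> {1..n}. q y < q x}"
      by blast
    then have "p x - 1 = q x - 1"
      using card_less_image_permutes[OF p x] card_less_image_permutes[OF q x] by simp
    moreover have "1 \<le> p x" "1 \<le> q x"
      using permutes_in_image[OF p] permutes_in_image[OF q] x by auto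
    ultimately show ?thesis
      by simp
  qed
qed

lemma initial_segment_of_interval:
  fixes D :: "nat set"
  assumes sub: "D \<subseteq> {a<..b}" and down: "\<And>x y. a < x \<Longrightarrow> x < y \<Longrightarrow> y \<in> D \<Longrightarrow> x \<in> D"
  shows "D = {a<..a + card D}"
proof (cases "D = {}")
  case False
  have "finite D"
    using sub finite_subset by blast
  define m where "m = Max D"
  have "m \<in> D"
    using \<open>finite D\<close> False m_def by simp
  have "D = {a<..m}"
  proof
    show "D \<subseteq> {a<..m}"
      using sub \<open>finite D\<close> m_def by auto
    show "{a<..m} \<subseteq> D"
      using down[of _ m] \<open>m \<in> D\<close> by (auto simp: le_less)
  qed
  moreover have "a < m"
    using sub \<open>m \<in> D\<close> by auto
  ultimately show ?thesis
    by simp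
qed simp

section \<open>Members moving the last position\<close>

definition peak_shape :: "nat \<Rightarrow> (nat \<Rightarrow> nat) \<Rightarrow> nat \<Rightarrow> bool" where
  "peak_shape n p i \<longleftrightarrow> 1 \<le> i \<and> i < n \<and> p i = n \<and>
     (\<forall>x y. i < x \<and> x < y \<and> y \<le> n \<longrightarrow> p x < p y) \<and>
     (\<forall>x y. 1 \<le> x \<and> x < y \<and> y < i \<longrightarrow> \<not> (p x < p n \<and> p y < p n)) \<and>
     (\<forall>x y. 1 \<le> x \<and> x < y \<and> y < i \<and> p n < p x \<and> p n < p y \<longrightarrow> p x < p y) \<and>
     (\<forall>x z. 1 < x \<and> x < i \<and> i < z \<and> z \<le> n \<and> p x < p n \<longrightarrow> p x < p z)"

lemma peak_shapeD:
  assumes "peak_shape n p i"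
  shows "1 \<le> i" "i < n" "p i = n"
    and "\<And>x y. i < x \<Longrightarrow> x < y \<Longrightarrow> y \<le> n \<Longrightarrow> p x < p y"
    and "\<And>x y. 1 \<le> x \<Longrightarrow> x < y \<Longrightarrow> y < i \<Longrightarrow> p x < p n \<Longrightarrow> p y < p n \<Longrightarrow> False"
    and "\<And>x y. 1 \<le> x \<Longrightarrow> x < y \<Longrightarrow> y < i \<Longrightarrow> p n < p x \<Longrightarrow> p n < p y \<Longrightarrow> p x < p y"
    and "\<And>x z. 1 < x \<Longrightarrow> x < i \<Longrightarrow> i < z \<Longrightarrow> z \<le> n \<Longrightarrow> p x < p n \<Longrightarrow> p x < p z"
  using assms unfolding peak_shape_def by blast+

lemma peak_shape_after_peak_le_last:
  assumes "peak_shape n p i" and "i < x" and "x \<le> n"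
  shows "p x \<le> p n"
  using peak_shapeD(4)[OF assms(1) assms(2) _ order.refl] assms(3) by (cases "x = n") auto

lemma peak_shape_no_321:
  assumes perm: "p permutes {1..n}" and shape: "peak_shape n p i"
    and idx: "1 \<le> a" "a < b" "b < c" "c \<le> n" and order: "p c < p b" "p b < p a"
  shows False
proof -
  note peak = peak_shapeD(1-3)[OF shape]
    and tail_increasing = peak_shapeD(4)[OF shape]
    and one_small = peak_shapeD(5)[OF shape]
    and large_increasing = peak_shapeD(6)[OF shape]
    and small_below_tail = peak_shapeD(7)[OF shape]
  have le_n: "p x \<le> n" if "1 \<le> x" "x \<le> n" for x
    using permutes_in_image[OF perm, of x] that by simp
  have "b \<noteq> n"
    using idx by simp
  then have "p b \<noteq> p n"
    using permutes_inj[OF perm] by (simp add: inj_eq)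
  then consider "i < b" | "b = i" | "b < i" "p n < p b" | "b < i" "p b < p n"
    by linarith
  then show False
  proof cases
    case 1
    then show False using tail_increasing[of b c] idx order by simp
  next
    case 2
    then show False using le_n[of a] peak idx order by simp
  next
    case 3
    then show False using large_increasing[of a b] idx order by simp
  next
    case 4
    then consider "c = i" | "i < c" | "c < i" by linarith
    then show False
    proof cases
      case 1
      then show False using le_n[of b] peak idx order by simp
    next
      case 2
      then show False using small_below_tail[of b c] \<open>b < i\<close> \<open>p b < p n\<close> idx order by simp
    next
      case 3
      then show False using one_small[of b c] \<open>p b < p n\<close> idx order by simp
    qed
  qed
qed

lemma peak_shape_no_x43:
  assumes perm: "p permutes {1..n}" and shape: "peak_shape n p i"
    and idx: "1 \<le> a" "a < b" "b < c" "c < d" "d \<le> n"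
    and order: "p a < p d" "p b < p d" "p d < p c"
  shows False
proof -
  note peak = peak_shapeD(1-3)[OF shape]
    and tail_increasing = peak_shapeD(4)[OF shape]
    and one_small = peak_shapeD(5)[OF shape]
    and large_increasing = peak_shapeD(6)[OF shape]
  consider "i < c" | "c \<le> i" "p d \<le> p n" | "c \<le> i" "p n < p d"
    by linarith
  then show False
  proof cases
    case 1
    then show False using tail_increasing[of c d] idx order by simp
  next
    case 2
    then show False using one_small[of a b] idx order by simp
  next
    case 3
    have "d \<noteq> i"
      using permutes_in_image[OF perm, of c] peak idx order by auto
    moreover have "\<not> i < d"
      using peak_shape_after_peak_le_last[OF shape, of d] 3 idx by auto
    ultimately have "d < i"
      by simp
    then show False using large_increasing[of c d] 3 idx order by simp
  qed
qed

lemma in_Av_if_peak_shape: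
  assumes "p permutes {1..n}" and "peak_shape n p i"
  shows "in_Av n p"
  unfolding in_Av_def using peak_shape_no_321[OF assms] peak_shape_no_x43[OF assms] by blast

lemma peak_shape_if_in_Av:
  assumes perm: "p permutes {1..n}" and av: "in_Av n p" and last: "p n \<noteq> n"
  shows "\<exists>i. peak_shape n p i"
proof -
  have no_321: False
    if "1 \<le> a" "a < b" "b < c" "c \<le> n" "p c < p b" "p b < p a" for a b c
    using av that unfolding in_Av_def by blast
  have no_x43: False
    if "1 \<le> a" "a < b" "b < c" "c < d" "d \<le> n" "p a < p d" "p b < p d" "p d < p c" for a b c d
    using av that unfolding in_Av_def by blast
  have distinct: "p x < p y \<or> p y < p x" if "x \<noteq> y" for x y
    using permutes_inj[OF perm] that by (metis injD linorder_neqE_nat)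
  have "n \<in> {1..n}"
    using last permutes_not_in[OF perm] by fastforce
  then obtain i where i: "i \<in> {1..n}" "p i = n"
    using permutes_image[OF perm] by (metis imageE)
  with last have "i < n" by (metis atLeastAtMost_iff le_neq_implies_less)
  have below_n: "p x < n" if "1 \<le> x" "x \<le> n" "x \<noteq> i" for x
    using permutes_in_image[OF perm, of x] distinct[of x i] that i by auto
  have tail_increasing: "p x < p y" if "i < x" "x < y" "y \<le> n" for x y
    using no_321[of i x y] distinct[of x y] below_n[of x] i that by auto
  have one_small: False if "1 \<le> x" "x < y" "y < i" "p x < p n" "p y < p n" for x y
    using no_x43[of x y i n] below_n[of n] \<open>i < n\<close> i that by auto
  have large_increasing: "p x < p y" if "1 \<le> x" "x < y" "y < i" "p n < p x" "p n < p y" for x y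
    using no_321[of x y n] distinct[of x y] \<open>i < n\<close> that by auto
  have small_below_tail: "p x < p z"
    if "1 < x" "x < i" "i < z" "z \<le> n" "p x < p n" for x z
  proof -
    have "p n < p 1"
      using one_small[of 1 x] distinct[of 1 n] \<open>i < n\<close> that by auto
    then show ?thesis
      using no_321[of 1 x z] distinct[of x z] that by auto
  qed
  have "peak_shape n p i"
    unfolding peak_shape_def
    using i \<open>i < n\<close> tail_increasing one_small large_increasing small_below_tail by auto
  then show ?thesis ..
qed

(* For 1 <= k the one-line notation is
     n-i+2, ..., n-i+k, r+1, n-i+k+1, ..., n-1, n, 1, ..., r, r+2, ..., n-i+1
   with the small entry r + 1 at position k and n at position i; k = 0 together with r = n - i
   encodes the absence of a small entry: n-i+1, ..., n-1, n, 1, ..., n-i. *)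
definition peak_perm :: "nat \<Rightarrow> nat \<Rightarrow> nat \<Rightarrow> nat \<Rightarrow> nat \<Rightarrow> nat" where
  "peak_perm n i k r x =
     (if x < 1 \<or> n < x then x
      else if x < k then n - i + 1 + x
      else if x = k then r + 1
      else if x < i then n - i + x
      else if x = i then n
      else if x \<le> i + r then x - i
      else x - i + 1)"

definition peak_params :: "nat \<Rightarrow> (nat \<times> nat \<times> nat) set" where
  "peak_params n =
     (\<lambda>i. (i, 0, n - i)) ` {1..<n} \<union>
     (SIGMA i:{2..<n}. {(k, r). 1 \<le> k \<and> k < i \<and> r < n - i \<and> (k = 1 \<or> r = 0)})"

lemma mem_peak_params_iff:
  "(i, k, r) \<in> peak_params n \<longleftrightarrow>
     1 \<le> i \<and> i < n \<and> (k = 0 \<and> r = n - i \<or> 1 \<le> k \<and> k < i \<and> r < n - i \<and> (k = 1 \<or> r = 0))"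
  unfolding peak_params_def by auto

lemma peak_params_cases:
  assumes "(i, k, r) \<in> peak_params n"
  obtains "k = 0" "r = n - i" "1 \<le> i" "i < n"
    | "k = 1" "r < n - i" "1 < i" "i < n"
    | "1 < k" "k < i" "r = 0" "i < n"
  using assms by (cases "k = 1") (auto simp: mem_peak_params_iff)

lemma peak_perm_permutes:
  assumes "(i, k, r) \<in> peak_params n"
  shows "peak_perm n i k r permutes {1..n}"
  using assms
  by (cases rule: peak_params_cases)
    (rule inj_imp_permutes; auto simp: inj_on_def peak_perm_def split: if_splits)+

lemma peak_shape_peak_perm:
  assumes "(i, k, r) \<in> peak_params n"
  shows "peak_shape n (peak_perm n i k r) i"
  using assms
  by (cases rule: peak_params_cases) (auto simp: peak_shape_def peak_perm_def)

lemma peak_perm_eqI: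
  assumes perm: "p permutes {1..n}" and shape: "peak_shape n p i"
    and params: "(i, k, r) \<in> peak_params n"
    and not_small: "\<And>x. 1 \<le> x \<Longrightarrow> x < i \<Longrightarrow> x \<noteq> k \<Longrightarrow> \<not> p x < p n"
    and small: "\<And>x. 1 \<le> k \<Longrightarrow> i < x \<Longrightarrow> x \<le> n \<Longrightarrow> p x < p k \<longleftrightarrow> x \<le> i + r"
  shows "p = peak_perm n i k r"
proof (rule permutes_eq_if_order_reflecting[OF perm peak_perm_permutes[OF params]])
  have distinct: "p x \<noteq> p y" if "x \<noteq> y" for x y
    using permutes_inj[OF perm] that by (simp add: inj_eq)
  note peak = peak_shapeD(1-3)[OF shape]
    and tail_increasing = peak_shapeD(4)[OF shape]
    and large_increasing = peak_shapeD(6)[OF shape]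
    and tail_le_last = peak_shape_after_peak_le_last[OF shape]
  have below_n: "p x < n" if "1 \<le> x" "x \<le> n" "x \<noteq> i" for x
    using permutes_in_image[OF perm, of x] distinct[of x i] peak that by auto
  have large: "p n < p x" if "1 \<le> x" "x < i" "x \<noteq> k" for x
    using not_small[OF that] distinct[of x n] peak that by auto
  have small_below_last: "p k < p n" if "1 \<le> k"
  proof -
    have "k < i" "r < n - i"
      using params that by (auto simp: mem_peak_params_iff)
    then have "\<not> p n < p k"
      using small[OF that, of n] peak by simp
    moreover have "p k \<noteq> p n"
      using distinct[of k n] \<open>k < i\<close> peak by simp
    ultimately show ?thesis
      by simp
  qed
  have bounds: "i + r \<le> n" "1 \<le> k \<Longrightarrow> k < i"
    using params by (auto simp: mem_peak_params_iff)
  fix x y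
  assume x: "x \<in> {1..n}" and y: "y \<in> {1..n}"
    and less: "peak_perm n i k r x < peak_perm n i k r y"
  \<comment> \<open>Both permutations list, in increasing order of values, the entries after n below the
    small entry, the small entry, the other entries after n, the entries before n, and n.\<close>
  show "p x < p y"
    using distinct[of x y] large[of x] large[of y] small[of x] small[of y] small_below_last
      below_n[of x] tail_le_last[of x] tail_increasing[of x y] large_increasing[of x y]
      peak bounds x y less
    by (auto simp: peak_perm_def split: if_splits)
qed

lemma peak_perm_if_no_small_entry:
  assumes perm: "p permutes {1..n}" and shape: "peak_shape n p i"
    and large: "\<And>x. 1 \<le> x \<Longrightarrow> x < i \<Longrightarrow> \<not> p x < p n"
  shows "(i, 0, n - i) \<in> peak_params n \<and> p = peak_perm n i 0 (n - i)"
proof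
  show params: "(i, 0, n - i) \<in> peak_params n"
    using peak_shapeD(1,2)[OF shape] by (simp add: mem_peak_params_iff)
  show "p = peak_perm n i 0 (n - i)"
    by (rule peak_perm_eqI[OF perm shape params]) (use large in auto)
qed

lemma peak_perm_if_small_entry:
  assumes perm: "p permutes {1..n}" and shape: "peak_shape n p i"
    and k: "1 \<le> k" "k < i" "p k < p n"
  shows "\<exists>r. (i, k, r) \<in> peak_params n \<and> p = peak_perm n i k r"
proof -
  note peak = peak_shapeD(1-3)[OF shape]
    and tail_increasing = peak_shapeD(4)[OF shape]
    and one_small = peak_shapeD(5)[OF shape]
    and small_below_tail = peak_shapeD(7)[OF shape]
  define D where "D = {x. i < x \<and> x \<le> n \<and> p x < p k}"
  define r where "r = card D"
  have D: "D = {i<..i + r}"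
    unfolding r_def
  proof (rule initial_segment_of_interval)
    show "D \<subseteq> {i<..n}"
      by (auto simp: D_def)
    show "x \<in> D" if "i < x" "x < y" "y \<in> D" for x y
      using tail_increasing[of x y] that by (auto simp: D_def)
  qed
  have "n \<notin> D"
    using k by (simp add: D_def)
  with D peak have "r < n - i"
    by auto
  moreover have "k = 1 \<or> r = 0"
  proof (rule ccontr)
    assume "\<not> (k = 1 \<or> r = 0)"
    then have "1 < k" "i + 1 \<in> D"
      using D k by auto
    moreover have "i + 1 \<le> n"
      using \<open>r < n - i\<close> by simp
    ultimately have "p k < p (i + 1)"
      using small_below_tail[of k "i + 1"] k by simp
    with \<open>i + 1 \<in> D\<close> show False
      by (simp add: D_def)
  qed
  ultimately have params: "(i, k, r) \<in> peak_params n"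
    using k peak by (auto simp: mem_peak_params_iff)
  have "p = peak_perm n i k r"
  proof (rule peak_perm_eqI[OF perm shape params])
    show "\<not> p x < p n" if "1 \<le> x" "x < i" "x \<noteq> k" for x
      using one_small[of x k] one_small[of k x] k that by (cases "x < k") auto
    show "p x < p k \<longleftrightarrow> x \<le> i + r" if "i < x" "x \<le> n" for x
    proof -
      have "x \<in> D \<longleftrightarrow> x \<le> i + r"
        using D that by simp
      with that show ?thesis
        by (simp add: D_def)
    qed
  qed
  with params show ?thesis
    by blast
qed

lemma peak_perm_if_peak_shape:
  assumes "p permutes {1..n}" and "peak_shape n p i"
  shows "\<exists>k r. (i, k, r) \<in> peak_params n \<and> p = peak_perm n i k r"
proof (cases "\<exists>k. 1 \<le> k \<and> k < i \<and> p k < p n")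
  case True
  then show ?thesis
    using peak_perm_if_small_entry[OF assms] by blast
next
  case False
  then show ?thesis
    using peak_perm_if_no_small_entry[OF assms] by blast
qed

lemma peak_perm_last:
  assumes "(i, k, r) \<in> peak_params n"
  shows "peak_perm n i k r n = (if k = 0 then n - i else n - i + 1)"
  using assms by (cases rule: peak_params_cases) (auto simp: peak_perm_def)

lemma peak_perm_first:
  assumes "(i, k, r) \<in> peak_params n" and "1 \<le> k"
  shows "peak_perm n i k r 1 = (if k = 1 then r + 1 else n - i + 2)"
  using assms by (cases rule: peak_params_cases) (auto simp: peak_perm_def)

lemma peak_perm_peak_unique:
  assumes params: "(i, k, r) \<in> peak_params n" "(i', k', r') \<in> peak_params n"
    and eq: "peak_perm n i k r = peak_perm n i' k' r'"
  shows "i = i'"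
proof -
  have "peak_perm n i k r i = peak_perm n i k r i'"
    using peak_shapeD(3)[OF peak_shape_peak_perm[OF params(1)]]
      peak_shapeD(3)[OF peak_shape_peak_perm[OF params(2)]] eq by simp
  then show ?thesis
    using permutes_inj[OF peak_perm_permutes[OF params(1)]] by (simp add: inj_eq)
qed

lemma peak_perm_small_entry_unique:
  assumes params: "(i, k, r) \<in> peak_params n" "(i, k', r') \<in> peak_params n"
    and eq: "peak_perm n i k r = peak_perm n i k' r'"
  shows "k = k' \<and> r = r'"
proof -
  have bounds: "r < n - i" "k < i" if "1 \<le> k"
    using params(1) that by (auto simp: mem_peak_params_iff)
  have bounds': "r' < n - i" "k' < i" if "1 \<le> k'"
    using params(2) that by (auto simp: mem_peak_params_iff)
  have zero: "k = 0 \<longleftrightarrow> k' = 0"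
    using peak_perm_last[OF params(1)] peak_perm_last[OF params(2)] eq by (auto split: if_splits)
  show ?thesis
  proof (cases "k = 0")
    case True
    with zero params show ?thesis
      by (auto simp: mem_peak_params_iff)
  next
    case False
    with zero have pos: "1 \<le> k" "1 \<le> k'"
      by auto
    have first: "(if k = 1 then r + 1 else n - i + 2) = (if k' = 1 then r' + 1 else n - i + 2)"
      using peak_perm_first[OF params(1) pos(1)] peak_perm_first[OF params(2) pos(2)] eq by simp
    show ?thesis
    proof (cases "k = 1 \<or> k' = 1")
      case True
      then show ?thesis
        using first bounds bounds' pos by (auto split: if_splits)
    next
      case False
      then have "r = 0" "r' = 0"
        using params pos by (auto simp: mem_peak_params_iff)
      have "peak_perm n i k r k' = peak_perm n i k' r' k'"
        using eq by simp
      also have "\<dots> = peak_perm n i k r k"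
        using \<open>r = 0\<close> \<open>r' = 0\<close> pos bounds(2) bounds'(2) params(1)
        by (simp add: peak_perm_def mem_peak_params_iff)
      finally show ?thesis
        using permutes_inj[OF peak_perm_permutes[OF params(1)]] \<open>r = 0\<close> \<open>r' = 0\<close>
        by (simp add: inj_eq)
    qed
  qed
qed

lemma peak_perm_inj_on: "inj_on (\<lambda>(i, k, r). peak_perm n i k r) (peak_params n)"
proof (rule inj_onI)
  fix x y
  assume "x \<in> peak_params n" "y \<in> peak_params n"
    and "(\<lambda>(i, k, r). peak_perm n i k r) x = (\<lambda>(i, k, r). peak_perm n i k r) y"
  moreover obtain i k r i' k' r' where xy: "x = (i, k, r)" "y = (i', k', r')"
    by (metis prod_cases3)
  ultimately have params: "(i, k, r) \<in> peak_params n" "(i', k', r') \<in> peak_params n"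
    and eq: "peak_perm n i k r = peak_perm n i' k' r'"
    by simp_all
  then have "i = i'"
    by (rule peak_perm_peak_unique)
  with params eq xy show "x = y"
    using peak_perm_small_entry_unique[of i k r n k' r'] by simp
qed

lemma Av_moving_last: "{p \<in> Av n. p n \<noteq> n} = (\<lambda>(i, k, r). peak_perm n i k r) ` peak_params n"
proof (intro equalityI subsetI)
  fix p
  assume "p \<in> {p \<in> Av n. p n \<noteq> n}"
  then have perm: "p permutes {1..n}" and "in_Av n p" "p n \<noteq> n"
    by (auto simp: Av_def)
  then obtain i where "peak_shape n p i"
    using peak_shape_if_in_Av by blast
  then obtain k r where "(i, k, r) \<in> peak_params n" "p = peak_perm n i k r"
    using peak_perm_if_peak_shape[OF perm] by blast
  then show "p \<in> (\<lambda>(i, k, r). peak_perm n i k r) ` peak_params n"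
    by force
next
  fix p
  assume "p \<in> (\<lambda>(i, k, r). peak_perm n i k r) ` peak_params n"
  then obtain i k r where params: "(i, k, r) \<in> peak_params n" and p: "p = peak_perm n i k r"
    by auto
  have perm: "p permutes {1..n}" and shape: "peak_shape n p i"
    using peak_perm_permutes[OF params] peak_shape_peak_perm[OF params] p by simp_all
  have "p n \<noteq> p i"
    using permutes_inj[OF perm] peak_shapeD(2)[OF shape] by (simp add: inj_eq)
  then show "p \<in> {p \<in> Av n. p n \<noteq> n}"
    using in_Av_if_peak_shape[OF perm shape] peak_shapeD(3)[OF shape] perm by (simp add: Av_def)
qed

section \<open>Counting\<close>

lemma card_hook:
  assumes "2 \<le> i" and "i < m"
  shows "card {(k, r). 1 \<le> k \<and> k < i \<and> r < m - i \<and> (k = 1 \<or> r = 0)} = m - 2"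
proof -
  let ?column = "{1::nat} \<times> {..<m - i}" and ?row = "{1..<i} \<times> {0::nat}"
  have "{(k, r). 1 \<le> k \<and> k < i \<and> r < m - i \<and> (k = 1 \<or> r = 0)} = ?column \<union> ?row"
    using assms by auto
  moreover have "card ?column + card ?row = card (?column \<union> ?row) + card (?column \<inter> ?row)"
    by (rule card_Un_Int) auto
  moreover have "?column \<inter> ?row = {(1, 0)}"
    using assms by auto
  ultimately show ?thesis
    using assms by simp
qed

lemma card_peak_params: "card (peak_params (Suc n)) = n + (n - 1)\<^sup>2"
proof -
  let ?no_small = "(\<lambda>i. (i, 0::nat, Suc n - i)) ` {1..<Suc n}"
    and ?hook = "\<lambda>i. {(k, r). 1 \<le> k \<and> k < i \<and> r < Suc n - i \<and> (k = 1 \<or> r = 0)}"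
  have finite_hook: "finite (?hook i)" for i
    by (rule finite_subset[of _ "{..<i} \<times> {..<Suc n}"]) auto
  have "card (SIGMA i:{2..<Suc n}. ?hook i) = (\<Sum>i\<in>{2..<Suc n}. card (?hook i))"
    using finite_hook by (intro card_SigmaI) auto
  also have "\<dots> = (\<Sum>i\<in>{2..<Suc n}. n - 1)"
    using card_hook[of _ "Suc n"] by (intro sum.cong) auto
  also have "\<dots> = (n - 1)\<^sup>2"
    by (simp add: power2_eq_square)
  finally have card_hooks: "card (SIGMA i:{2..<Suc n}. ?hook i) = (n - 1)\<^sup>2" .
  have "card (peak_params (Suc n)) = card ?no_small + card (SIGMA i:{2..<Suc n}. ?hook i)"
    unfolding peak_params_def by (rule card_Un_disjoint) (use finite_hook in auto)
  moreover have "card ?no_small = n"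
    by (subst card_image) (auto simp: inj_on_def)
  ultimately show ?thesis
    using card_hooks by simp
qed

lemma finite_Av: "finite (Av n)"
  by (rule finite_subset[of _ "{p. p permutes {1..n}}"]) (auto simp: Av_def finite_permutations)

lemma card_Av_Suc: "card (Av (Suc n)) = card (Av n) + n + (n - 1)\<^sup>2"
proof -
  have "card (Av (Suc n)) =
      card ({p \<in> Av (Suc n). p (Suc n) = Suc n} \<union> {p \<in> Av (Suc n). p (Suc n) \<noteq> Suc n})"
    by (rule arg_cong[where f = card]) blast
  also have "\<dots> = card {p \<in> Av (Suc n). p (Suc n) = Suc n} + card {p \<in> Av (Suc n). p (Suc n) \<noteq> Suc n}"
    by (rule card_Un_disjoint) (use finite_Av in auto)
  also have "\<dots> = card (Av n) + card (peak_params (Suc n))"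
    unfolding Av_Suc_fixing_last Av_moving_last using peak_perm_inj_on by (simp add: card_image)
  finally show ?thesis
    by (simp add: card_peak_params)
qed

lemma Av_0: "Av 0 = {id}"
  by (auto simp: Av_def in_Av_def)

lemma double_choose_two: "2 * (m choose 2) = m * (m - 1)"
  by (induction m) (auto simp: choose_two)

lemma card_Av: "1 \<le> n \<Longrightarrow> card (Av n) = n + 2 * (n choose 3)"
proof (induction n rule: nat_induct_at_least)
  case base
  show ?case
    using card_Av_Suc[of 0] by (simp add: Av_0)
next
  case (Suc m)
  have "Suc m choose 3 = (m choose 2) + (m choose 3)"
    by (simp add: numeral_3_eq_3 numeral_2_eq_2)
  moreover have "m + (m - 1)\<^sup>2 = 1 + m * (m - 1)"
    using Suc.hyps by (cases m) (simp_all add: power2_eq_square)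
  ultimately show ?case
    using card_Av_Suc[of m] Suc.IH double_choose_two[of m] by simp
qed

theorem corollary3p10:
  fixes n :: nat
  assumes "n \<ge> 1"
  shows "card {p \<in> perms n. avoids n p [1,2,4,3] \<and> avoids n p [2,1,4,3] \<and> avoids n p [3,2,1]}
           = n + 2 * (n choose 3)"
proof -
  have "{p \<in> perms n. avoids n p [1,2,4,3] \<and> avoids n p [2,1,4,3] \<and> avoids n p [3,2,1]} = Av n"
    unfolding perms_def Av_def using permutes_in_Av_iff_avoids by blast
  with card_Av[OF assms] show ?thesis
    by simp
qed

end
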